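(* Let $\mathbb{F}$ be a clone on a set $A$ and let $\mathbb{S}\subseteq\mathbb{F}^{(1)}$ be a transformation semigroup (closed under composition). If $\operatorname{cf}(\mathbb{S})>\aleph_0$ and $\operatorname{rank}(\mathbb{F}:\mathbb{S})$ is finite, then $\operatorname{cf}(\mathbb{F})>\aleph_0$.
   Context: A clone on $A$ is a set of finitary operations on $A$ containing all projections and closed under composition $f\circ\langle g_1,\dots,g_n\rangle(\bar x)=f(g_1(\bar x),\dots,g_n(\bar x))$; $\mathbb{F}^{(n)}$ denotes the $n$-ary members of $\mathbb{F}$; $\langle M\rangle_{O_A}$ is the clone generated by $M$. $\operatorname{rank}(\mathbb{F}:M)$ is the least cardinality of $N\subseteq\mathbb{F}$ with $\langle M\cup N\rangle_{O_A}=\mathbb{F}$. The cofinality $\operatorname{cf}$ of a non-finitely generated algebraic structure (clone, semigroup) is the least cardinal $\lambda$ such that it is the union of an increasing chain $(\mathbb{A}_i)_{i<\lambda}$ of proper substructures (subclones, resp. subsemigroups). *)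

theory Defs
  imports Main
begin

text \<open>Finitary operations on the base set A, taken to be the universe of the type 'a.
  An n-ary operation is a pair (n, f) with f :: 'a list => 'a, normalised so that
  f xs = undefined whenever length xs is not n (so that equal operations are equal terms).\<close>

type_synonym 'a operation = "nat \<times> ('a list \<Rightarrow> 'a)"

definition ops :: "'a operation set" where
  "ops = {(n, f). \<forall>xs. length xs \<noteq> n \<longrightarrow> f xs = undefined}"

definition proj :: "nat \<Rightarrow> nat \<Rightarrow> 'a operation" where
  "proj n i = (n, \<lambda>xs. if length xs = n then xs ! i else undefined)"

definition ocomp :: "'a operation \<Rightarrow> 'a operation list \<Rightarrow> nat \<Rightarrow> 'a operation" where
  "ocomp f gs n = (n, \<lambda>xs. if length xs = n then snd f (map (\<lambda>g. snd g xs) gs) else undefined)"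

definition is_clone :: "'a operation set \<Rightarrow> bool" where
  "is_clone C \<longleftrightarrow> C \<subseteq> ops
     \<and> (\<forall>n i. i < n \<longrightarrow> proj n i \<in> C)
     \<and> (\<forall>f gs n. f \<in> C \<longrightarrow> length gs = fst f \<longrightarrow> set gs \<subseteq> C
            \<longrightarrow> (\<forall>g\<in>set gs. fst g = n) \<longrightarrow> ocomp f gs n \<in> C)"

definition clone_gen :: "'a operation set \<Rightarrow> 'a operation set" where
  "clone_gen M = \<Inter>{C. is_clone C \<and> M \<subseteq> C}"

definition arity_part :: "'a operation set \<Rightarrow> nat \<Rightarrow> 'a operation set" where
  "arity_part F n = {f \<in> F. fst f = n}"

definition comp_closed :: "'a operation set \<Rightarrow> bool" where
  "comp_closed T \<longleftrightarrow> (\<forall>f\<in>T. \<forall>g\<in>T. ocomp f [g] 1 \<in> T)"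

definition transformation_semigroup_in :: "'a operation set \<Rightarrow> 'a operation set \<Rightarrow> bool" where
  "transformation_semigroup_in S F \<longleftrightarrow> S \<subseteq> arity_part F 1 \<and> comp_closed S"

definition finite_rank :: "'a operation set \<Rightarrow> 'a operation set \<Rightarrow> bool" where
  "finite_rank F M \<longleftrightarrow> (\<exists>N. finite N \<and> N \<subseteq> F \<and> clone_gen (M \<union> N) = F)"

text \<open>cf > aleph_0: the structure is not the union of an increasing countable (omega-indexed)
  chain of proper substructures.\<close>
definition clone_cf_uncountable :: "'a operation set \<Rightarrow> bool" where
  "clone_cf_uncountable F \<longleftrightarrow>
     \<not> (\<exists>C :: nat \<Rightarrow> 'a operation set.
          (\<forall>k. C k \<subseteq> C (Suc k)) \<and> (\<forall>k. is_clone (C k) \<and> C k \<subset> F) \<and> (\<Union>k. C k) = F)"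

definition semigroup_cf_uncountable :: "'a operation set \<Rightarrow> bool" where
  "semigroup_cf_uncountable S \<longleftrightarrow>
     \<not> (\<exists>C :: nat \<Rightarrow> 'a operation set.
          (\<forall>k. C k \<subseteq> C (Suc k)) \<and> (\<forall>k. comp_closed (C k) \<and> C k \<subset> S) \<and> (\<Union>k. C k) = S)"

end

theory Submission
  imports Defs
begin

text \<open>Suppose F is the union of a countable increasing chain of proper subclones C k. The
  finitely many extra generators of F lie in a single C i. The unary parts of the C k form a
  countable chain of subsemigroups covering S, so S lies in a single C j: otherwise their traces
  on S would be a countable chain of proper subsemigroups exhausting S. Then C (max i j) contains
  S together with the generators, hence the clone F they generate, contradicting properness.\<close>

lemma finite_subset_mono_Union:
  fixes B :: "nat \<Rightarrow> 'a set"
  assumes "mono B" and "finite A" and "A \<subseteq> (\<Union>i. B i)"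
  obtains n where "A \<subseteq> B n"
proof -
  obtain n where "A \<subseteq> (\<Union>i<n. B i)"
    using finite_countable_subset assms(2,3) by blast
  also have "\<dots> \<subseteq> B n"
    using monoD[OF \<open>mono B\<close>] by (meson UN_least lessThan_iff less_imp_le)
  finally show ?thesis ..
qed

lemma clone_gen_least:
  assumes "is_clone C" and "M \<subseteq> C"
  shows "clone_gen M \<subseteq> C"
  using assms unfolding clone_gen_def by blast

lemma comp_closed_unary_part:
  assumes "is_clone C"
  shows "comp_closed (arity_part C 1)"
  unfolding comp_closed_def
proof (intro ballI)
  fix f g assume "f \<in> arity_part C 1" "g \<in> arity_part C 1"
  then have "f \<in> C" "g \<in> C" "fst f = 1" "fst g = 1"
    by (auto simp: arity_part_def)
  moreover have "\<And>f gs n. f \<in> C \<Longrightarrow> length gs = fst f \<Longrightarrow> set gs \<subseteq> C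
      \<Longrightarrow> \<forall>g\<in>set gs. fst g = n \<Longrightarrow> ocomp f gs n \<in> C"
    using assms unfolding is_clone_def by blast
  ultimately have "ocomp f [g] 1 \<in> C"
    by simp
  then show "ocomp f [g] 1 \<in> arity_part C 1"
    by (simp add: arity_part_def ocomp_def)
qed

lemma comp_closed_Int:
  assumes "comp_closed A" and "comp_closed B"
  shows "comp_closed (A \<inter> B)"
  using assms unfolding comp_closed_def by blast

lemma semigroup_cf_uncountableD:
  fixes D :: "nat \<Rightarrow> 'a operation set"
  assumes "semigroup_cf_uncountable S"
    and "mono D" and "\<And>k. comp_closed (D k)" and "comp_closed S" and "S \<subseteq> (\<Union>k. D k)"
  obtains k where "S \<subseteq> D k"
proof (rule ccontr)
  assume not_covered: "\<not> thesis"
  define E where "E k = D k \<inter> S" for k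
  have "E k \<subseteq> E (Suc k)" for k
    using monoD[OF \<open>mono D\<close>, of k "Suc k"] by (auto simp: E_def)
  moreover have "comp_closed (E k) \<and> E k \<subset> S" for k
    using comp_closed_Int[OF assms(3,4)] that not_covered by (auto simp: E_def)
  moreover have "(\<Union>k. E k) = S"
    using assms(5) by (auto simp: E_def)
  ultimately show False
    using assms(1) unfolding semigroup_cf_uncountable_def by blast
qed

theorem proposition6p1:
  fixes F S :: "'a operation set"
  assumes "is_clone F"
    and "transformation_semigroup_in S F"
    and "semigroup_cf_uncountable S"
    and "finite_rank F S"
  shows "clone_cf_uncountable F"
  unfolding clone_cf_uncountable_def
proof
  assume "\<exists>C :: nat \<Rightarrow> 'a operation set.
          (\<forall>k. C k \<subseteq> C (Suc k)) \<and> (\<forall>k. is_clone (C k) \<and> C k \<subset> F) \<and> (\<Union>k. C k) = F"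
  then obtain C :: "nat \<Rightarrow> 'a operation set" where
    chain: "\<forall>k. C k \<subseteq> C (Suc k)" and clone_proper: "\<forall>k. is_clone (C k) \<and> C k \<subset> F"
    and exhaust: "(\<Union>k. C k) = F"
    by (elim exE conjE)
  have clone: "\<And>k. is_clone (C k)" and proper: "\<And>k. C k \<subset> F"
    using clone_proper by simp_all
  from chain have "mono C"
    by (simp add: mono_iff_le_Suc)
  obtain N where "finite N" "N \<subseteq> F" and generates: "clone_gen (S \<union> N) = F"
    using assms(4) unfolding finite_rank_def by blast
  then obtain i where "N \<subseteq> C i"
    using finite_subset_mono_Union[OF \<open>mono C\<close>] exhaust by metis
  have S_unary: "S \<subseteq> arity_part F 1" and "comp_closed S"
    using assms(2) unfolding transformation_semigroup_in_def by auto
  have "mono (\<lambda>k. arity_part (C k) 1)"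
    using monoD[OF \<open>mono C\<close>] by (auto simp: mono_def arity_part_def)
  moreover have "S \<subseteq> (\<Union>k. arity_part (C k) 1)"
    using S_unary exhaust by (auto simp: arity_part_def)
  ultimately obtain j where "S \<subseteq> arity_part (C j) 1"
    by (rule semigroup_cf_uncountableD[where D = "\<lambda>k. arity_part (C k) 1",
          OF assms(3) _ comp_closed_unary_part[OF clone] \<open>comp_closed S\<close>])
  then have "S \<union> N \<subseteq> C (max i j)"
    using \<open>N \<subseteq> C i\<close> monoD[OF \<open>mono C\<close>, of i "max i j"] monoD[OF \<open>mono C\<close>, of j "max i j"]
    by (auto simp: arity_part_def)
  then have "F \<subseteq> C (max i j)"
    using clone_gen_least[OF clone] generates by blast
  with proper show False by blast
qed

end
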